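(* GDD message passing always converges: for any input, the sequence of dual objective values $g(\boldsymbol\lambda^{(k)})$, $k=1,2,\dots$, computed after each sweep of GDD converges (to a finite limit).
   Context: Let $\mathcal{V}=\{1,\dots,n\}$; each variable $x_i$ takes values in a finite set, $\mathbf{x}_s=(x_i)_{i\in s}$ for $s\subseteq\mathcal{V}$. Let $\mathcal{C}$ be a collection of subsets of $\mathcal{V}$ with real potentials $\theta_c(\mathbf{x}_c)$. Let $\mathcal{C}'$ be a finite collection of subsets of $\mathcal{V}$ and for each $c\in\mathcal{C}'$ let $\mathcal{S}(c)$ be a collection of subsets of $c$ (possibly containing $c$), with $\mathcal{S}(c)\setminus\{c\}\neq\emptyset$ and $\mathcal{C}'\cup\bigcup_{c}\mathcal{S}(c)\supseteq\mathcal{C}$; put $\mathcal{T}=\mathcal{C}'\cup\bigcup_{c\in\mathcal{C}'}\mathcal{S}(c)$. Messages are reals $\lambda_{c\to s}(\mathbf{x}_s)$, $c\in\mathcal{C}'$, $s\in\mathcal{S}(c)\setminus\{c\}$. For $t\in\mathcal{T}$: $\hat\theta_t=\mathbb{1}(t\in\mathcal{C})\theta_t$; $\gamma_t(\mathbf{x}_t)=\mathbb{1}(t\in\mathcal{C}')\sum_{\hat s\in\mathcal{S}(t)\setminus\{t\}}\lambda_{t\to\hat s}(\mathbf{x}_{\hat s})$; $\lambda_t(\mathbf{x}_t)=\sum_{c'\in\mathcal{C}':\,t\in\mathcal{S}(c')\setminus\{c'\}}\lambda_{c'\to t}(\mathbf{x}_t)$; beliefs $b_t=\hat\theta_t+\lambda_t-\gamma_t$;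 dual objective $g(\boldsymbol\lambda)=\sum_{t\in\mathcal{T}}\max_{\mathbf{x}_t}b_t(\mathbf{x}_t)$. For $c\in\mathcal{C}'$, $s\in\mathcal{S}(c)\setminus\{c\}$, $\lambda_s^{-c}(\mathbf{x}_s)=\sum_{\hat c\in\mathcal{C}':\,\hat c\ne c,\ s\in\mathcal{S}(\hat c)\setminus\{\hat c\}}\lambda_{\hat c\to s}(\mathbf{x}_s)$. GDD message passing: start with all messages equal to $0$; in each sweep, go through the clusters $c\in\mathcal{C}'$ one at a time and replace, for all $s\in\mathcal{S}(c)\setminus\{c\}$ and $\mathbf{x}_s$ simultaneously, $\lambda_{c\to s}(\mathbf{x}_s)$ by $\lambda^*_{c\to s}(\mathbf{x}_s)=-\hat\theta_s(\mathbf{x}_s)+\gamma_s(\mathbf{x}_s)-\lambda_s^{-c}(\mathbf{x}_s)+\frac{1}{|\mathcal{S}(c)\setminus\{c\}|}\max_{\mathbf{x}_{c\setminus s}}[\hat\theta_c(\mathbf{x}_c)+\lambda_c(\mathbf{x}_c)+\sum_{\hat s\in\mathcal{S}(c)\setminus\{c\}}(\hat\theta_{\hat s}-\gamma_{\hat s}+\lambda^{-c}_{\hat s})(\mathbf{x}_{\hat s})]$ (all quantities evaluated at the current messages); after each sweep $k$ record $g(\boldsymbol\lambda^{(k)})$. *)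

theory Defs
  imports "HOL-Library.FuncSet" Complex_Main
begin

text \<open>Assignments x_s to a variable set s are the extensional functions in PiE s D
(value undefined outside s). Messages lam c s x_s, potentials th t x_t.
Parameters: D (domains), C, th, C' (Cp), S.\<close>

definition maxover :: "('v \<Rightarrow> 'a set) \<Rightarrow> 'v set \<Rightarrow> (('v \<Rightarrow> 'a) \<Rightarrow> real) \<Rightarrow> real" where
  "maxover D t f = Max (f ` PiE t D)"

definition Tset :: "'v set set \<Rightarrow> ('v set \<Rightarrow> 'v set set) \<Rightarrow> 'v set set" where
  "Tset Cp S = Cp \<union> (\<Union>c\<in>Cp. S c)"

definition theta_hat :: "'v set set \<Rightarrow> ('v set \<Rightarrow> ('v \<Rightarrow> 'a) \<Rightarrow> real) \<Rightarrow> 'v set \<Rightarrow> ('v \<Rightarrow> 'a) \<Rightarrow> real" where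
  "theta_hat C th t x = (if t \<in> C then th t x else 0)"

definition gamma :: "'v set set \<Rightarrow> ('v set \<Rightarrow> 'v set set)
    \<Rightarrow> ('v set \<Rightarrow> 'v set \<Rightarrow> ('v \<Rightarrow> 'a) \<Rightarrow> real) \<Rightarrow> 'v set \<Rightarrow> ('v \<Rightarrow> 'a) \<Rightarrow> real" where
  "gamma Cp S lam t x = (if t \<in> Cp then (\<Sum>s\<in>S t - {t}. lam t s (restrict x s)) else 0)"

definition lam_in :: "'v set set \<Rightarrow> ('v set \<Rightarrow> 'v set set)
    \<Rightarrow> ('v set \<Rightarrow> 'v set \<Rightarrow> ('v \<Rightarrow> 'a) \<Rightarrow> real) \<Rightarrow> 'v set \<Rightarrow> ('v \<Rightarrow> 'a) \<Rightarrow> real" where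
  "lam_in Cp S lam t x = (\<Sum>c'\<in>{c'\<in>Cp. t \<in> S c' - {c'}}. lam c' t x)"

definition lam_minus :: "'v set set \<Rightarrow> ('v set \<Rightarrow> 'v set set)
    \<Rightarrow> ('v set \<Rightarrow> 'v set \<Rightarrow> ('v \<Rightarrow> 'a) \<Rightarrow> real) \<Rightarrow> 'v set \<Rightarrow> 'v set \<Rightarrow> ('v \<Rightarrow> 'a) \<Rightarrow> real" where
  "lam_minus Cp S lam c s x = (\<Sum>c'\<in>{c'\<in>Cp. c' \<noteq> c \<and> s \<in> S c' - {c'}}. lam c' s x)"

definition belief where
  "belief C th Cp S lam t x = theta_hat C th t x + lam_in Cp S lam t x - gamma Cp S lam t x"

definition dual_obj where
  "dual_obj D C th Cp S lam = (\<Sum>t\<in>Tset Cp S. maxover D t (belief C th Cp S lam t))"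

definition lam_star where
  "lam_star D C th Cp S lam c s xs =
     - theta_hat C th s xs + gamma Cp S lam s xs - lam_minus Cp S lam c s xs
     + (1 / real (card (S c - {c}))) *
       Max ((\<lambda>xc. theta_hat C th c xc + lam_in Cp S lam c xc
               + (\<Sum>s'\<in>S c - {c}. theta_hat C th s' (restrict xc s')
                                   - gamma Cp S lam s' (restrict xc s')
                                   + lam_minus Cp S lam c s' (restrict xc s')))
            ` {xc \<in> PiE c D. restrict xc s = xs})"

definition gdd_update where
  "gdd_update D C th Cp S c lam =
     (\<lambda>c' s xs. if c' = c \<and> s \<in> S c - {c} then lam_star D C th Cp S lam c s xs else lam c' s xs)"

definition gdd_sweep where
  "gdd_sweep D C th Cp S cs lam = fold (gdd_update D C th Cp S) cs lam"

definition gdd_iter where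
  "gdd_iter D C th Cp S cs k = (gdd_sweep D C th Cp S cs ^^ k) (\<lambda>_ _ _. 0)"

end

theory Submission
  imports Defs
begin

text \<open>The messages sent into a region and those sent out of it cancel in the sum over all
regions, so for every full assignment \<open>x\<close> the primal value \<open>\<Sum>\<^sub>t \<theta>\<^sub>t(x\<^sub>t)\<close> is a lower bound of
the dual objective. A block update at a cluster \<open>c\<close> leaves the cluster potential
\<open>b\<^sub>c(x\<^sub>c) + \<Sum>\<^sub>s b\<^sub>s(x\<^sub>s)\<close> unchanged and afterwards makes every \<open>b\<^sub>s\<close> equal to \<open>1/|S(c)\<setminus>{c}|\<close> times a
max-marginal of that potential and \<open>b\<^sub>c \<le> 0\<close>; hence the contribution of \<open>c\<close> and its separators
to the dual objective drops to the maximum of the cluster potential, which never exceeds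
that contribution. The dual values thus form a decreasing sequence bounded from below.\<close>

locale gdd_instance =
  fixes V :: "'v set" and D :: "'v \<Rightarrow> 'a set"
    and C :: "'v set set" and th :: "'v set \<Rightarrow> ('v \<Rightarrow> 'a) \<Rightarrow> real"
    and Cp :: "'v set set" and S :: "'v set \<Rightarrow> 'v set set"
  assumes finite_V: "finite V"
    and domains: "\<And>i. i \<in> V \<Longrightarrow> finite (D i) \<and> D i \<noteq> {}"
    and finite_Cp: "finite Cp" and Cp_subset: "Cp \<subseteq> Pow V"
    and S_subsets: "\<And>c. c \<in> Cp \<Longrightarrow> S c \<subseteq> Pow c \<and> S c - {c} \<noteq> {}"
begin

abbreviation "T \<equiv> Tset Cp S"
abbreviation "bel \<equiv> belief C th Cp S"
abbreviation "dual \<equiv> dual_obj D C th Cp S"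
abbreviation "upd \<equiv> gdd_update D C th Cp S"

lemma PiE_domains_finite_nonempty:
  assumes "t \<subseteq> V" shows "finite (PiE t D)" "PiE t D \<noteq> {}"
proof -
  have "finite t" using assms finite_V finite_subset by blast
  then show "finite (PiE t D)" using assms domains by (intro finite_PiE) auto
  show "PiE t D \<noteq> {}" using assms domains by (auto simp: PiE_eq_empty_iff)
qed

lemma PiE_extend:
  assumes "s \<subseteq> c" "c \<subseteq> V" "xs \<in> PiE s D"
  obtains x where "x \<in> PiE c D" "restrict x s = xs"
proof -
  obtain y where y: "y \<in> PiE c D" using PiE_domains_finite_nonempty(2)[OF assms(2)] by blast
  let ?x = "\<lambda>i. if i \<in> s then xs i else y i"
  have "?x \<in> PiE c D" using y assms(1,3) by (auto simp: PiE_iff extensional_def)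
  moreover have "restrict ?x s = xs" using assms(3) by (auto simp: PiE_iff extensional_def)
  ultimately show thesis by (rule that)
qed

lemma maxover_ge: "t \<subseteq> V \<Longrightarrow> x \<in> PiE t D \<Longrightarrow> f x \<le> maxover D t f"
  unfolding maxover_def using PiE_domains_finite_nonempty by (intro Max_ge) auto

lemma maxover_le: "t \<subseteq> V \<Longrightarrow> (\<And>x. x \<in> PiE t D \<Longrightarrow> f x \<le> B) \<Longrightarrow> maxover D t f \<le> B"
  unfolding maxover_def using PiE_domains_finite_nonempty by (subst Max_le_iff) auto

lemma Tset_subset: "T \<subseteq> Pow V"
  unfolding Tset_def using Cp_subset S_subsets by blast

lemma finite_Tset: "finite T"
  using Tset_subset finite_V by (meson finite_Pow_iff finite_subset)

lemma sum_lam_in_eq_sum_gamma: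
  "(\<Sum>t\<in>T. lam_in Cp S L t (restrict x t)) = (\<Sum>t\<in>T. gamma Cp S L t (restrict x t))"
proof -
  have "(\<Sum>t\<in>T. lam_in Cp S L t (restrict x t))
      = (\<Sum>c\<in>Cp. \<Sum>t\<in>{t\<in>T. t \<in> S c - {c}}. L c t (restrict x t))"
    unfolding lam_in_def by (rule sum.swap_restrict[OF finite_Tset finite_Cp])
  also have "\<dots> = (\<Sum>c\<in>Cp. \<Sum>t\<in>S c - {c}. L c t (restrict x t))"
    by (intro sum.cong refl arg_cong[where f="\<lambda>A. sum _ A"]) (auto simp: Tset_def)
  also have "\<dots> = (\<Sum>c\<in>Cp. gamma Cp S L c (restrict x c))"
  proof (intro sum.cong refl)
    fix c assume "c \<in> Cp"
    then have "c \<inter> s = s" if "s \<in> S c - {c}" for s using that S_subsets by blast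
    then show "(\<Sum>t\<in>S c - {c}. L c t (restrict x t)) = gamma Cp S L c (restrict x c)"
      using \<open>c \<in> Cp\<close> by (simp add: gamma_def)
  qed
  also have "\<dots> = (\<Sum>t\<in>T. gamma Cp S L t (restrict x t))"
    by (rule sum.mono_neutral_left) (use finite_Tset in \<open>auto simp: Tset_def gamma_def\<close>)
  finally show ?thesis .
qed

lemma primal_le_dual:
  assumes "x \<in> PiE V D"
  shows "(\<Sum>t\<in>T. theta_hat C th t (restrict x t)) \<le> dual L"
proof -
  have "(\<Sum>t\<in>T. theta_hat C th t (restrict x t)) = (\<Sum>t\<in>T. bel L t (restrict x t))"
    using sum_lam_in_eq_sum_gamma[of L x] by (simp add: belief_def sum.distrib sum_subtractf)
  also have "\<dots> \<le> dual L"
    unfolding dual_obj_def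
  proof (intro sum_mono maxover_ge)
    fix t assume "t \<in> T"
    then show "t \<subseteq> V" using Tset_subset by blast
    then show "restrict x t \<in> PiE t D" using assms by (auto simp: PiE_iff)
  qed
  finally show ?thesis .
qed

definition cluster_pot where
  "cluster_pot L c x = bel L c x + (\<Sum>s\<in>S c - {c}. bel L s (restrict x s))"

definition max_marginal where
  "max_marginal L c s xs = Max (cluster_pot L c ` {x \<in> PiE c D. restrict x s = xs})"

definition local_obj where
  "local_obj L c = maxover D c (bel L c) + (\<Sum>s\<in>S c - {c}. maxover D s (bel L s))"

context
  fixes c assumes c: "c \<in> Cp"
begin

lemma cluster_subset: "c \<subseteq> V"
  using c Cp_subset by blast

lemma separator_subset: "s \<in> S c - {c} \<Longrightarrow> s \<subseteq> c"
  using S_subsets[OF c] by blast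

lemma finite_separators: "finite (S c - {c})"
  using S_subsets[OF c] cluster_subset finite_V
  by (meson finite_Diff finite_Pow_iff finite_subset)

lemma card_separators_pos: "card (S c - {c}) > 0"
  using finite_separators S_subsets[OF c] by (simp add: card_gt_0_iff)

lemma lam_in_separator:
  assumes "s \<in> S c - {c}"
  shows "lam_in Cp S L s x = L c s x + lam_minus Cp S L c s x"
proof -
  have "{c' \<in> Cp. s \<in> S c' - {c'}} = insert c {c' \<in> Cp. c' \<noteq> c \<and> s \<in> S c' - {c'}}"
    using assms c by auto
  then show ?thesis
    unfolding lam_in_def lam_minus_def using finite_Cp by simp
qed

text \<open>The cluster potential does not depend on the messages sent out of \<open>c\<close>.\<close>

lemma cluster_pot_eq:
  "cluster_pot L c x = theta_hat C th c x + lam_in Cp S L c x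
     + (\<Sum>s\<in>S c - {c}. theta_hat C th s (restrict x s) - gamma Cp S L s (restrict x s)
                       + lam_minus Cp S L c s (restrict x s))"
  using c by (simp add: cluster_pot_def belief_def gamma_def lam_in_separator
      sum.distrib sum_subtractf algebra_simps)

lemma lam_star_eq:
  "lam_star D C th Cp S L c s xs = - theta_hat C th s xs + gamma Cp S L s xs
     - lam_minus Cp S L c s xs + max_marginal L c s xs / card (S c - {c})"
  unfolding lam_star_def max_marginal_def cluster_pot_eq by simp

lemma cluster_pot_le_max_marginal:
  "x \<in> PiE c D \<Longrightarrow> cluster_pot L c x \<le> max_marginal L c s (restrict x s)"
  unfolding max_marginal_def
  using PiE_domains_finite_nonempty(1)[OF cluster_subset] by (intro Max_ge) auto

lemma max_marginal_le:
  assumes "s \<in> S c - {c}" "xs \<in> PiE s D"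
  shows "max_marginal L c s xs \<le> maxover D c (cluster_pot L c)"
proof -
  obtain x where "x \<in> PiE c D" "restrict x s = xs"
    using PiE_extend[OF separator_subset[OF assms(1)] cluster_subset assms(2)] .
  then have "{x \<in> PiE c D. restrict x s = xs} \<noteq> {}" by blast
  then show ?thesis
    unfolding max_marginal_def maxover_def
    using PiE_domains_finite_nonempty(1)[OF cluster_subset] by (intro Max_mono) auto
qed

lemma maxover_cluster_pot_le_local_obj: "maxover D c (cluster_pot L c) \<le> local_obj L c"
proof (rule maxover_le[OF cluster_subset])
  fix x assume x: "x \<in> PiE c D"
  show "cluster_pot L c x \<le> local_obj L c"
    unfolding cluster_pot_def local_obj_def
  proof (intro add_mono sum_mono maxover_ge)
    fix s assume "s \<in> S c - {c}"
    then have "s \<subseteq> c" by (rule separator_subset)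
    then show "s \<subseteq> V" "restrict x s \<in> PiE s D"
      using cluster_subset x by (auto simp: PiE_iff)
  qed (use cluster_subset x in auto)
qed

lemma dual_split:
  "dual L = (\<Sum>t\<in>T - insert c (S c - {c}). maxover D t (bel L t)) + local_obj L c"
proof -
  have "insert c (S c - {c}) \<subseteq> T" using c by (auto simp: Tset_def)
  then have "dual L = (\<Sum>t\<in>T - insert c (S c - {c}). maxover D t (bel L t))
      + (\<Sum>t\<in>insert c (S c - {c}). maxover D t (bel L t))"
    unfolding dual_obj_def by (intro sum.subset_diff finite_Tset)
  also have "(\<Sum>t\<in>insert c (S c - {c}). maxover D t (bel L t)) = local_obj L c"
    unfolding local_obj_def by (rule sum.insert) (use finite_separators in auto)
  finally show ?thesis .
qed

lemma upd_other: "\<not> (c' = c \<and> s \<in> S c - {c}) \<Longrightarrow> upd c L c' s = L c' s"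
  unfolding gdd_update_def by auto

lemma gamma_upd_other: "t \<noteq> c \<Longrightarrow> gamma Cp S (upd c L) t = gamma Cp S L t"
  by (intro ext) (simp add: gamma_def upd_other)

lemma lam_minus_upd: "lam_minus Cp S (upd c L) c = lam_minus Cp S L c"
  by (intro ext) (simp add: lam_minus_def upd_other)

lemma lam_in_upd_other: "t \<notin> S c - {c} \<Longrightarrow> lam_in Cp S (upd c L) t = lam_in Cp S L t"
  by (intro ext) (simp add: lam_in_def upd_other)

lemma belief_upd_other: "t \<noteq> c \<Longrightarrow> t \<notin> S c - {c} \<Longrightarrow> bel (upd c L) t = bel L t"
  by (intro ext) (simp add: belief_def gamma_upd_other lam_in_upd_other)

lemma cluster_pot_upd: "cluster_pot (upd c L) c = cluster_pot L c"
  by (intro ext) (simp add: cluster_pot_eq lam_in_upd_other gamma_upd_other lam_minus_upd)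

lemma belief_upd_separator:
  assumes "s \<in> S c - {c}"
  shows "bel (upd c L) s xs = max_marginal L c s xs / card (S c - {c})"
proof -
  have "upd c L c s xs = lam_star D C th Cp S L c s xs"
    using assms by (simp add: gdd_update_def)
  moreover have "s \<noteq> c" using assms by blast
  ultimately show ?thesis
    using assms by (simp add: belief_def lam_in_separator lam_star_eq gamma_upd_other lam_minus_upd)
qed

lemma belief_upd_cluster_nonpos:
  assumes x: "x \<in> PiE c D"
  shows "bel (upd c L) c x \<le> 0"
proof -
  let ?m = "real (card (S c - {c}))"
  have "cluster_pot L c x
      = bel (upd c L) c x + (\<Sum>s\<in>S c - {c}. max_marginal L c s (restrict x s) / ?m)"
    unfolding cluster_pot_upd[of L, symmetric] cluster_pot_def
    by (simp add: belief_upd_separator)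
  then have "bel (upd c L) c x
      = cluster_pot L c x - (\<Sum>s\<in>S c - {c}. max_marginal L c s (restrict x s) / ?m)"
    by simp
  also have "\<dots> \<le> cluster_pot L c x - (\<Sum>s\<in>S c - {c}. cluster_pot L c x / ?m)"
    using cluster_pot_le_max_marginal[OF x] card_separators_pos
    by (intro diff_left_mono sum_mono divide_right_mono) auto
  also have "\<dots> = 0"
    using card_separators_pos by simp
  finally show ?thesis .
qed

lemma local_obj_upd_le: "local_obj (upd c L) c \<le> maxover D c (cluster_pot L c)"
proof -
  let ?M = "maxover D c (cluster_pot L c)" and ?m = "real (card (S c - {c}))"
  have "maxover D s (bel (upd c L) s) \<le> ?M / ?m" if s: "s \<in> S c - {c}" for s
  proof (rule maxover_le)
    show "s \<subseteq> V" using separator_subset[OF s] cluster_subset by blast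
    fix xs assume xs: "xs \<in> PiE s D"
    have "bel (upd c L) s xs = max_marginal L c s xs / ?m"
      by (rule belief_upd_separator[OF s])
    also have "\<dots> \<le> ?M / ?m"
      by (intro divide_right_mono max_marginal_le[OF s xs]) simp
    finally show "bel (upd c L) s xs \<le> ?M / ?m" .
  qed
  then have "(\<Sum>s\<in>S c - {c}. maxover D s (bel (upd c L) s)) \<le> (\<Sum>s\<in>S c - {c}. ?M / ?m)"
    by (rule sum_mono)
  also have "\<dots> = ?M"
    using card_separators_pos by simp
  moreover have "maxover D c (bel (upd c L) c) \<le> 0"
    using cluster_subset belief_upd_cluster_nonpos by (rule maxover_le)
  ultimately show ?thesis
    unfolding local_obj_def by linarith
qed

lemma dual_upd_le: "dual (upd c L) \<le> dual L"
proof -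
  have "(\<Sum>t\<in>T - insert c (S c - {c}). maxover D t (bel (upd c L) t))
      = (\<Sum>t\<in>T - insert c (S c - {c}). maxover D t (bel L t))"
    by (intro sum.cong refl) (simp add: belief_upd_other)
  moreover have "local_obj (upd c L) c \<le> local_obj L c"
    using local_obj_upd_le maxover_cluster_pot_le_local_obj by (rule order_trans)
  ultimately show ?thesis
    by (simp add: dual_split[of "upd c L"] dual_split[of L])
qed

end

lemma dual_fold_upd_le: "set cs \<subseteq> Cp \<Longrightarrow> dual (fold upd cs L) \<le> dual L"
proof (induction cs arbitrary: L)
  case (Cons c cs)
  then show ?case using dual_upd_le[of c L] by (auto intro: order_trans)
qed simp

end

theorem proposition3:
  fixes V :: "'v set" and D :: "'v \<Rightarrow> 'a set"
    and C :: "'v set set" and th :: "'v set \<Rightarrow> ('v \<Rightarrow> 'a) \<Rightarrow> real"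
    and Cp :: "'v set set" and S :: "'v set \<Rightarrow> 'v set set"
    and cs :: "'v set list"
  assumes "finite V"
    and "\<And>i. i \<in> V \<Longrightarrow> finite (D i) \<and> D i \<noteq> {}"
    and "C \<subseteq> Pow V"
    and "finite Cp" and "Cp \<subseteq> Pow V"
    and "\<And>c. c \<in> Cp \<Longrightarrow> S c \<subseteq> Pow c \<and> S c - {c} \<noteq> {}"
    and "C \<subseteq> Cp \<union> (\<Union>c\<in>Cp. S c)"
    and "distinct cs" and "set cs = Cp"
  shows "convergent (\<lambda>k. dual_obj D C th Cp S (gdd_iter D C th Cp S cs k))"
proof -
  interpret gdd_instance V D C th Cp S
    using assms by unfold_locales auto
  let ?f = "\<lambda>k. dual (gdd_iter D C th Cp S cs k)"
  have "decseq ?f"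
    using dual_fold_upd_le \<open>set cs = Cp\<close>
    by (intro decseq_SucI) (simp add: gdd_iter_def gdd_sweep_def)
  moreover obtain x where "x \<in> PiE V D"
    using PiE_domains_finite_nonempty(2)[of V] by blast
  then have "\<forall>k. (\<Sum>t\<in>T. theta_hat C th t (restrict x t)) \<le> ?f k"
    using primal_le_dual by blast
  ultimately show ?thesis
    using decseq_convergent unfolding convergent_def by blast
qed

end
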